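(* Let $\delta\in(0,1]$, let $G$ be an $n$-vertex graph and let $V(G)=X_1\cup\dots\cup X_k$ be a partition such that each $X_i$ is a clique in $G$ and $(X_i,X_j)$ is induced $M_2$-free for every $1\le i<j\le k$. Then there is a $\delta$-homogeneous partition of $V(G)$ which refines $\{X_1,\dots,X_k\}$ and has at most $k(2/\delta)^k$ parts.
   Context: For disjoint $X,Y\subseteq V(G)$, an induced copy of $M_2$ in $(X,Y)$ is an unordered quadruple $x,x',y,y'$ with $x,x'\in X$, $y,y'\in Y$, $(x,y),(x',y')\in E(G)$ and $(x,y'),(x',y)\notin E(G)$; $(X,Y)$ is induced $M_2$-free if it contains no such copy. A pair $(A,B)$ of disjoint vertex sets is homogeneous if the bipartite graph of $G$ between $A$ and $B$ is complete or empty. A partition $\mathcal P$ of $V(G)$ of an $n$-vertex graph is $\delta$-homogeneous if the sum of $|U||V|$ over all unordered pairs of distinct parts $U,V\in\mathcal P$ such that $(U,V)$ is not homogeneous is at most $\delta n^2$. A partition $\mathcal P_2$ refines $\mathcal P_1$ if every part of $\mathcal P_2$ is contained in a part of $\mathcal P_1$. *)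

theory Defs
  imports Complex_Main "HOL-Library.Disjoint_Sets"
begin

text \<open>Graphs: a finite vertex set V with a symmetric irreflexive edge relation E.\<close>

definition clique :: "('a \<Rightarrow> 'a \<Rightarrow> bool) \<Rightarrow> 'a set \<Rightarrow> bool" where
  "clique E X \<longleftrightarrow> (\<forall>x\<in>X. \<forall>y\<in>X. x \<noteq> y \<longrightarrow> E x y)"

definition induced_M2_free :: "('a \<Rightarrow> 'a \<Rightarrow> bool) \<Rightarrow> 'a set \<Rightarrow> 'a set \<Rightarrow> bool" where
  "induced_M2_free E X Y \<longleftrightarrow>
     \<not> (\<exists>x\<in>X. \<exists>x'\<in>X. \<exists>y\<in>Y. \<exists>y'\<in>Y.
          E x y \<and> E x' y' \<and> \<not> E x y' \<and> \<not> E x' y)"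

definition homogeneous :: "('a \<Rightarrow> 'a \<Rightarrow> bool) \<Rightarrow> 'a set \<Rightarrow> 'a set \<Rightarrow> bool" where
  "homogeneous E A B \<longleftrightarrow> (\<forall>a\<in>A. \<forall>b\<in>B. E a b) \<or> (\<forall>a\<in>A. \<forall>b\<in>B. \<not> E a b)"

text \<open>Sum over unordered pairs of distinct parts = half the sum over ordered pairs.\<close>
definition delta_homogeneous ::
  "('a \<Rightarrow> 'a \<Rightarrow> bool) \<Rightarrow> 'a set \<Rightarrow> 'a set set \<Rightarrow> real \<Rightarrow> bool" where
  "delta_homogeneous E V P \<delta> \<longleftrightarrow>
     (\<Sum>(U, W)\<in>{(U, W). U \<in> P \<and> W \<in> P \<and> U \<noteq> W \<and> \<not> homogeneous E U W}.
         real (card U * card W)) / 2 \<le> \<delta> * (real (card V))\<^sup>2"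

definition refines :: "'a set set \<Rightarrow> 'a set set \<Rightarrow> bool" where
  "refines P2 P1 \<longleftrightarrow> (\<forall>U\<in>P2. \<exists>W\<in>P1. U \<subseteq> W)"

end

theory Submission
  imports Defs "HOL-Library.Product_Lexorder"
begin

text \<open>
  For i < j, induced M2-freeness of (X i, X j) makes the neighbourhoods in X j of the vertices
  of X i a chain. Listing X i by decreasing neighbourhood gives a bijective ranking \<rho> onto
  {..<|X i|} with u ~ w iff \<rho> u < deg w, where deg w is the number of neighbours of w in X i:
  between two cliques the graph is a threshold graph.

  Cut {0..|X i|} into m = \<lceil>1/\<delta>\<rceil> intervals of length \<lfloor>|X i|/m\<rfloor> + 1 and give a vertex of X c the
  vector of interval indices of its degrees into the X j (j < c) and of its ranks towards the
  X j (j > c). The classes of equal vectors refine the X i and number at most k m^k. Two classes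
  inside one clique are homogeneous; two classes in X i and X j (i < j) can only fail to be
  homogeneous if the rank interval of the first equals the degree interval of the second. For a
  fixed w in X j this allows at most |X i|/m + 1 \<le> 2|X i|/m vertices u (and none at all if
  |X i| < m), so the non-homogeneous weight is at most \<Sum>_{i<j} 2|X i||X j|/m \<le> n^2/m \<le> \<delta> n^2.
\<close>

definition rank :: "('a \<Rightarrow> 'b::linorder) \<Rightarrow> 'a set \<Rightarrow> 'a \<Rightarrow> nat" where
  "rank f A x = card {y \<in> A. f y < f x}"

lemma rank_strict_mono:
  assumes "finite A" "x \<in> A" "f x < f y"
  shows "rank f A x < rank f A y"
  unfolding rank_def
proof (rule psubset_card_mono)
  show "finite {z \<in> A. f z < f y}" using assms(1) by simp
  show "{z \<in> A. f z < f x} \<subset> {z \<in> A. f z < f y}"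
    using assms(2,3) less_trans by auto
qed

lemma bij_betw_rank:
  assumes "finite A" "inj_on f A"
  shows "bij_betw (rank f A) A {..<card A}"
proof -
  have inj: "inj_on (rank f A) A"
  proof (rule inj_onI)
    fix x y assume "x \<in> A" "y \<in> A" "rank f A x = rank f A y"
    then show "x = y"
      using rank_strict_mono[OF assms(1)] \<open>inj_on f A\<close>
      by (metis inj_on_eq_iff less_irrefl linorder_neqE)
  qed
  have "rank f A x < card A" if "x \<in> A" for x
    unfolding rank_def by (rule psubset_card_mono) (use assms that in auto)
  then have "rank f A ` A \<subseteq> {..<card A}" by auto
  moreover have "card (rank f A ` A) = card {..<card A}"
    using card_image[OF inj] by simp
  ultimately show ?thesis
    unfolding bij_betw_def using inj by (simp add: card_subset_eq)
qed

lemma rank_less_card_iff: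
  assumes "finite A" "inj_on f A" "D \<subseteq> A" "u \<in> A"
    and down: "\<And>x y. x \<in> D \<Longrightarrow> y \<in> A \<Longrightarrow> f y < f x \<Longrightarrow> y \<in> D"
  shows "u \<in> D \<longleftrightarrow> rank f A u < card D"
proof
  assume "u \<in> D"
  then have "{y \<in> A. f y < f u} \<subset> D" using down by auto
  then show "rank f A u < card D"
    unfolding rank_def by (meson assms(1,3) finite_subset psubset_card_mono)
next
  assume less: "rank f A u < card D"
  show "u \<in> D"
  proof (rule ccontr)
    assume "u \<notin> D"
    then have "f d < f u" if "d \<in> D" for d
      using that down assms(2-4) inj_on_eq_iff[OF assms(2)]
      by (metis linorder_neqE subsetD)
    then have "D \<subseteq> {y \<in> A. f y < f u}" using assms(3) by auto
    then have "card D \<le> rank f A u"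
      unfolding rank_def using assms(1) by (simp add: card_mono)
    then show False using less by simp
  qed
qed

lemma induced_M2_free_nested:
  assumes "induced_M2_free E A B" "x \<in> A" "x' \<in> A"
  shows "{y \<in> B. E x y} \<subseteq> {y \<in> B. E x' y} \<or> {y \<in> B. E x' y} \<subseteq> {y \<in> B. E x y}"
  using assms unfolding induced_M2_free_def by blast

lemma induced_M2_free_threshold:
  assumes "finite A" "finite B" "induced_M2_free E A B"
  obtains \<rho> where "bij_betw \<rho> A {..<card A}"
    and "\<And>u w. u \<in> A \<Longrightarrow> w \<in> B \<Longrightarrow> E u w \<longleftrightarrow> \<rho> u < card {x \<in> A. E x w}"
proof -
  obtain g :: "'a \<Rightarrow> nat" where g: "inj_on g A"
    using finite_imp_inj_to_nat_seg[OF assms(1)] by blast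
  define N where "N x = {y \<in> B. E x y}" for x
  define key where "key x = (- int (card (N x)), g x)" for x
  have inj: "inj_on key A"
    using g unfolding key_def inj_on_def by simp
  have down: "E x' w"
    if "x \<in> A" "x' \<in> A" "w \<in> B" "E x w" "key x' < key x" for x x' w
  proof -
    have "card (N x) \<le> card (N x')"
      using that(5) unfolding key_def less_prod_def by auto
    moreover have "finite (N x)" using assms(2) unfolding N_def by simp
    ultimately have "N x \<subseteq> N x'"
      using induced_M2_free_nested[OF assms(3) that(1,2)] card_seteq
      unfolding N_def by blast
    then show ?thesis using that(3,4) unfolding N_def by blast
  qed
  show thesis
  proof
    show "bij_betw (rank key A) A {..<card A}" by (rule bij_betw_rank[OF assms(1) inj])
    fix u w assume "u \<in> A" "w \<in> B"
    then show "E u w \<longleftrightarrow> rank key A u < card {x \<in> A. E x w}"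
      using rank_less_card_iff[OF assms(1) inj, of "{x \<in> A. E x w}" u] down by blast
  qed
qed

lemma induced_M2_free_threshold_family:
  fixes X :: "nat \<Rightarrow> 'a set" and k :: nat
  assumes "\<And>i. i < k \<Longrightarrow> finite (X i)"
    and "\<And>i j. i < j \<Longrightarrow> j < k \<Longrightarrow> induced_M2_free E (X i) (X j)"
  obtains \<rho> where "\<And>i j. i < j \<Longrightarrow> j < k \<Longrightarrow> bij_betw (\<rho> i j) (X i) {..<card (X i)}"
    and "\<And>i j u w. i < j \<Longrightarrow> j < k \<Longrightarrow> u \<in> X i \<Longrightarrow> w \<in> X j \<Longrightarrow>
           E u w \<longleftrightarrow> \<rho> i j u < card {x \<in> X i. E x w}"
proof -
  have "\<exists>r. bij_betw r (X i) {..<card (X i)} \<and>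
      (\<forall>u\<in>X i. \<forall>w\<in>X j. E u w \<longleftrightarrow> r u < card {x \<in> X i. E x w})" if ij: "i < j" "j < k" for i j
  proof -
    have "i < k" using ij by simp
    then have fin: "finite (X i)" "finite (X j)" using assms(1) ij by simp_all
    obtain r where "bij_betw r (X i) {..<card (X i)}"
      and "\<And>u w. u \<in> X i \<Longrightarrow> w \<in> X j \<Longrightarrow> E u w \<longleftrightarrow> r u < card {x \<in> X i. E x w}"
      using induced_M2_free_threshold[OF fin assms(2)[OF ij]] by blast
    then show ?thesis by blast
  qed
  then obtain \<rho> where \<rho>: "\<And>i j. i < j \<Longrightarrow> j < k \<Longrightarrow> bij_betw (\<rho> i j) (X i) {..<card (X i)} \<and>
      (\<forall>u\<in>X i. \<forall>w\<in>X j. E u w \<longleftrightarrow> \<rho> i j u < card {x \<in> X i. E x w})"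
    by metis
  show thesis
  proof (rule that)
    show "bij_betw (\<rho> i j) (X i) {..<card (X i)}" if "i < j" "j < k" for i j
      using \<rho>[OF that] by blast
    show "E u w \<longleftrightarrow> \<rho> i j u < card {x \<in> X i. E x w}"
      if "i < j" "j < k" "u \<in> X i" "w \<in> X j" for i j u w
      using \<rho>[OF that(1,2)] that(3,4) by blast
  qed
qed

lemma div_Suc_div_less:
  fixes a m v :: nat
  assumes "0 < m" "v \<le> a"
  shows "v div (a div m + 1) < m"
proof -
  have "a < a div m * m + m"
    using div_mult_mod_eq[of a m] mod_less_divisor[OF assms(1), of a] by linarith
  then have "a < m * (a div m + 1)" by (simp add: algebra_simps)
  then have "a div (a div m + 1) < m" by (rule less_mult_imp_div_less)
  then show ?thesis using div_le_mono[OF assms(2)] by (rule le_less_trans[rotated])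
qed

lemma mult_Suc_div_le:
  fixes a m :: nat
  assumes "m \<le> a"
  shows "m * (a div m + 1) \<le> 2 * a"
proof -
  have "m * (a div m) \<le> a" by (simp add: minus_mod_eq_mult_div[symmetric])
  moreover have "m * (a div m + 1) = m * (a div m) + m" by simp
  ultimately show ?thesis using assms by linarith
qed

lemma card_div_fibre_le:
  fixes f :: "'a \<Rightarrow> nat"
  assumes "inj_on f A" "0 < b"
  shows "card {x \<in> A. f x div b = t} \<le> b"
proof -
  have "f ` {x \<in> A. f x div b = t} \<subseteq> {t * b..<t * b + b}"
  proof (rule image_subsetI)
    fix x assume "x \<in> {x \<in> A. f x div b = t}"
    then have "f x = t * b + f x mod b" by (metis (mono_tags) div_mult_mod_eq mem_Collect_eq)
    then show "f x \<in> {t * b..<t * b + b}" using mod_less_divisor[OF assms(2), of "f x"] by simp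
  qed
  moreover have "inj_on f {x \<in> A. f x div b = t}"
    using assms(1) by (rule inj_on_subset) auto
  ultimately have "card {x \<in> A. f x div b = t} \<le> card {t * b..<t * b + b}"
    using card_inj_on_le by blast
  then show ?thesis by simp
qed

lemma sum_lower_pairs_le_square:
  fixes f :: "nat \<Rightarrow> nat"
  shows "2 * (\<Sum>j<k. f j * (\<Sum>i<j. f i)) \<le> (\<Sum>i<k. f i)\<^sup>2"
proof (induction k)
  case 0 then show ?case by simp
next
  case (Suc k)
  define S where "S = (\<Sum>i<k. f i)"
  have "2 * (\<Sum>j<Suc k. f j * (\<Sum>i<j. f i)) = 2 * (\<Sum>j<k. f j * (\<Sum>i<j. f i)) + 2 * f k * S"
    by (simp add: S_def algebra_simps)
  also have "\<dots> \<le> S\<^sup>2 + 2 * f k * S" using Suc S_def by simp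
  also have "\<dots> \<le> (S + f k)\<^sup>2" by (simp add: power2_eq_square algebra_simps)
  finally show ?case by (simp add: S_def)
qed

lemma sum_card_product_le_card:
  assumes "partition_on V P" "finite V" "Q \<subseteq> P \<times> P" "finite Z"
    and "\<And>U W x y. (U, W) \<in> Q \<Longrightarrow> x \<in> U \<Longrightarrow> y \<in> W \<Longrightarrow> (x, y) \<in> Z"
  shows "(\<Sum>(U, W)\<in>Q. card U * card W) \<le> card Z"
proof -
  have finP: "finite P" using finite_elements[OF assms(2,1)] .
  have finU: "finite U" if "U \<in> P" for U
    using that assms(1,2) partition_onD1 by (metis Union_upper finite_subset)
  have "(\<Sum>(U, W)\<in>Q. card U * card W) = (\<Sum>p\<in>Q. card (fst p \<times> snd p))"
    by (simp add: card_cartesian_product case_prod_beta)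
  also have "\<dots> = card (\<Union>p\<in>Q. fst p \<times> snd p)"
  proof (rule card_UN_disjoint[symmetric])
    show "finite Q" using finP assms(3) finite_subset by blast
    show "\<forall>p\<in>Q. finite (fst p \<times> snd p)" using assms(3) finU by auto
    show "\<forall>p\<in>Q. \<forall>q\<in>Q. p \<noteq> q \<longrightarrow> fst p \<times> snd p \<inter> (fst q \<times> snd q) = {}"
    proof (intro ballI impI)
      fix p q assume "p \<in> Q" "q \<in> Q" "p \<noteq> q"
      moreover have "fst p \<in> P" "snd p \<in> P" "fst q \<in> P" "snd q \<in> P"
        using assms(3) \<open>p \<in> Q\<close> \<open>q \<in> Q\<close> by (auto simp: mem_Times_iff)
      ultimately have "fst p \<inter> fst q = {} \<or> snd p \<inter> snd q = {}"
        using partition_onD2[OF assms(1)] by (metis disjointD prod_eq_iff)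
      then show "fst p \<times> snd p \<inter> (fst q \<times> snd q) = {}" by auto
    qed
  qed
  also have "\<dots> \<le> card Z"
  proof (rule card_mono[OF assms(4)], intro UN_least)
    fix p assume "p \<in> Q"
    then show "fst p \<times> snd p \<subseteq> Z" using assms(5)[of "fst p" "snd p"] by auto
  qed
  finally show ?thesis .
qed

lemma delta_homogeneous_mono:
  "delta_homogeneous E V P \<delta> \<Longrightarrow> \<delta> \<le> \<delta>' \<Longrightarrow> delta_homogeneous E V P \<delta>'"
  unfolding delta_homogeneous_def
  by (smt (verit) mult_right_mono zero_le_power2)

locale threshold_cliques =
  fixes V :: "'a set" and E :: "'a \<Rightarrow> 'a \<Rightarrow> bool" and X :: "nat \<Rightarrow> 'a set" and k :: nat
    and \<rho> :: "nat \<Rightarrow> nat \<Rightarrow> 'a \<Rightarrow> nat" and m :: nat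
  assumes finite_V: "finite V"
    and sym_E: "\<And>u v. E u v \<Longrightarrow> E v u"
    and disjoint_X: "\<And>i j. i < k \<Longrightarrow> j < k \<Longrightarrow> i \<noteq> j \<Longrightarrow> X i \<inter> X j = {}"
    and cover: "(\<Union>i<k. X i) = V"
    and clique_X: "\<And>i. i < k \<Longrightarrow> clique E (X i)"
    and bij_rank: "\<And>i j. i < j \<Longrightarrow> j < k \<Longrightarrow> bij_betw (\<rho> i j) (X i) {..<card (X i)}"
    and threshold: "\<And>i j u w. i < j \<Longrightarrow> j < k \<Longrightarrow> u \<in> X i \<Longrightarrow> w \<in> X j \<Longrightarrow>
                      E u w \<longleftrightarrow> \<rho> i j u < card {x \<in> X i. E x w}"
    and m_pos: "0 < m"
begin

definition deg :: "nat \<Rightarrow> 'a \<Rightarrow> nat" where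
  "deg i w = card {x \<in> X i. E x w}"

definition bucket :: "nat \<Rightarrow> nat \<Rightarrow> nat" where
  "bucket i v = v div (card (X i) div m + 1)"

definition block :: "'a \<Rightarrow> nat" where
  "block v = (THE i. i < k \<and> v \<in> X i)"

definition coord :: "'a \<Rightarrow> nat \<Rightarrow> nat" where
  "coord v j =
     (if j < block v then bucket j (deg j v)
      else if block v < j then bucket (block v) (\<rho> (block v) j v) else 0)"

definition label :: "'a \<Rightarrow> nat \<times> nat list" where
  "label v = (block v, map (coord v) [0..<k])"

definition cell :: "'a \<Rightarrow> 'a set" where
  "cell v = {u \<in> V. label u = label v}"

definition cells :: "'a set set" where
  "cells = cell ` V"

definition bad :: "nat \<Rightarrow> nat \<Rightarrow> ('a \<times> 'a) set" where
  "bad i j = {(u, w) \<in> X i \<times> X j. m \<le> card (X i) \<and> bucket i (\<rho> i j u) = bucket i (deg i w)}"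

definition bad_pairs :: "('a \<times> 'a) set" where
  "bad_pairs = (\<Union>j<k. \<Union>i<j. bad i j \<union> prod.swap ` bad i j)"

lemma X_subset_V: "i < k \<Longrightarrow> X i \<subseteq> V"
  using cover by blast

lemma finite_X: "i < k \<Longrightarrow> finite (X i)"
  using finite_subset[OF X_subset_V finite_V] .

lemma block_eqI: "i < k \<Longrightarrow> v \<in> X i \<Longrightarrow> block v = i"
  unfolding block_def by (rule the_equality) (use disjoint_X in blast)+

lemma block_less: "v \<in> V \<Longrightarrow> block v < k"
  and mem_X_block: "v \<in> V \<Longrightarrow> v \<in> X (block v)"
  using cover block_eqI by blast+

lemma deg_le: "deg i w \<le> card (X i)" if "i < k"
  unfolding deg_def using finite_X[OF that] by (intro card_mono) auto

lemma \<rho>_less_card: "i < j \<Longrightarrow> j < k \<Longrightarrow> u \<in> X i \<Longrightarrow> \<rho> i j u < card (X i)"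
  using bij_rank bij_betwE by blast

lemma bucket_less: "v \<le> card (X i) \<Longrightarrow> bucket i v < m"
  unfolding bucket_def by (rule div_Suc_div_less[OF m_pos])

lemma bucket_mono: "v \<le> v' \<Longrightarrow> bucket i v \<le> bucket i v'"
  unfolding bucket_def by (rule div_le_mono)

lemma bucket_eq_self: "card (X i) < m \<Longrightarrow> bucket i v = v"
  unfolding bucket_def by simp

lemma coord_less: "v \<in> V \<Longrightarrow> j < k \<Longrightarrow> coord v j < m"
  unfolding coord_def
  by (auto intro!: bucket_less deg_le less_imp_le[OF \<rho>_less_card] block_less mem_X_block m_pos)

lemma card_cells: "card cells \<le> k * m ^ k"
proof -
  have "cells = (\<lambda>l. {u \<in> V. label u = l}) ` label ` V"
    unfolding cells_def cell_def by auto
  then have "card cells \<le> card (label ` V)"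
    by (simp add: card_image_le finite_V)
  also have "\<dots> \<le> card ({..<k} \<times> {xs. set xs \<subseteq> {..<m} \<and> length xs = k})"
    by (rule card_mono)
      (auto simp: finite_lists_length_eq label_def coord_less block_less)
  also have "\<dots> = k * m ^ k"
    by (simp add: card_cartesian_product card_lists_length_eq)
  finally show ?thesis .
qed

lemma partition_on_cells: "partition_on V cells"
  unfolding partition_on_def disjoint_def cells_def cell_def by auto

lemma cell_subset_X: "cell v \<subseteq> X (block v)"
proof
  fix u assume "u \<in> cell v"
  then have "u \<in> V" "block u = block v" unfolding cell_def label_def by auto
  then show "u \<in> X (block v)" using mem_X_block by metis
qed

lemma refines_cells: "refines cells (X ` {..<k})"
  unfolding refines_def cells_def using cell_subset_X block_less by blast

lemma block_cell: "u \<in> cell v \<Longrightarrow> block u = block v"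
  unfolding cell_def label_def by simp

lemma coord_cell: "u \<in> cell v \<Longrightarrow> j < k \<Longrightarrow> coord u j = coord v j"
  unfolding cell_def label_def by auto

lemma homogeneous_same_block:
  assumes "x \<in> V" "y \<in> V" "block x = block y" "cell x \<noteq> cell y"
  shows "homogeneous E (cell x) (cell y)"
proof -
  have "cell x \<inter> cell y = {}"
    using assms(4) unfolding cell_def by auto
  moreover have "cell x \<subseteq> X (block x)" "cell y \<subseteq> X (block x)"
    using cell_subset_X[of x] cell_subset_X[of y] assms(3) by simp_all
  ultimately show ?thesis
    using clique_X[OF block_less[OF assms(1)]]
    unfolding homogeneous_def clique_def by (metis disjoint_iff subsetD)
qed

lemma non_homogeneous_bad:
  assumes "x \<in> V" "y \<in> V" "block x < block y" "\<not> homogeneous E (cell x) (cell y)"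
  shows "(x, y) \<in> bad (block x) (block y)"
proof -
  define i j where "i = block x" and "j = block y"
  have ij: "i < j" "j < k" using assms(3) block_less[OF assms(2)] unfolding i_def j_def by auto
  have U: "u \<in> X i" "bucket i (\<rho> i j u) = coord x j" if "u \<in> cell x" for u
  proof -
    have "block u = i" using block_cell[OF that] unfolding i_def .
    then have "coord u j = bucket i (\<rho> i j u)" unfolding coord_def using ij by simp
    then show "u \<in> X i" "bucket i (\<rho> i j u) = coord x j"
      using cell_subset_X[of x] that coord_cell[OF that ij(2)] unfolding i_def by auto
  qed
  have W: "w \<in> X j" "bucket i (deg i w) = coord y i" if "w \<in> cell y" for w
  proof -
    have "block w = j" using block_cell[OF that] unfolding j_def .
    then have "coord w i = bucket i (deg i w)" unfolding coord_def using ij by simp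
    then show "w \<in> X j" "bucket i (deg i w) = coord y i"
      using cell_subset_X[of y] that coord_cell[OF that] ij unfolding j_def by auto
  qed
  obtain u1 w1 where 1: "u1 \<in> cell x" "w1 \<in> cell y" "E u1 w1"
    using assms(4) unfolding homogeneous_def by blast
  obtain u2 w2 where 2: "u2 \<in> cell x" "w2 \<in> cell y" "\<not> E u2 w2"
    using assms(4) unfolding homogeneous_def by blast
  have less: "\<rho> i j u1 < deg i w1" and ge: "deg i w2 \<le> \<rho> i j u2"
    using threshold[OF ij] 1 2 U W unfolding deg_def by (auto simp: not_less)
  have "coord x j \<le> coord y i"
    using bucket_mono[of "\<rho> i j u1" "deg i w1" i] less U(2)[OF 1(1)] W(2)[OF 1(2)] by simp
  moreover have "coord y i \<le> coord x j"
    using bucket_mono[OF ge, of i] U(2)[OF 2(1)] W(2)[OF 2(2)] by simp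
  ultimately have eq: "coord x j = coord y i" by simp
  \<comment> \<open>if |X i| < m the buckets are singletons, so equal coordinates would give \<rho> i j u1 = deg i w1\<close>
  have "m \<le> card (X i)"
    using bucket_eq_self less eq U(2)[OF 1(1)] W(2)[OF 1(2)] by (metis leI less_irrefl)
  moreover have "x \<in> cell x" "y \<in> cell y" unfolding cell_def using assms(1,2) by auto
  ultimately show ?thesis
    unfolding bad_def i_def[symmetric] j_def[symmetric] using U W eq by auto
qed

lemma card_bad:
  assumes "i < j" "j < k"
  shows "m * card (bad i j) \<le> 2 * card (X i) * card (X j)"
proof (cases "m \<le> card (X i)")
  case False
  then show ?thesis unfolding bad_def by simp
next
  case True
  define b where "b = card (X i) div m + 1"
  define F where "F w = {u \<in> X i. \<rho> i j u div b = bucket i (deg i w)}" for w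
  have inj: "inj_on (\<rho> i j) (X i)" using bij_rank[OF assms] bij_betw_def by blast
  have "bad i j \<subseteq> (\<Union>w\<in>X j. F w \<times> {w})"
    unfolding bad_def F_def bucket_def b_def by blast
  moreover have "finite (\<Union>w\<in>X j. F w \<times> {w})"
    using finite_X assms unfolding F_def by simp
  ultimately have "card (bad i j) \<le> card (\<Union>w\<in>X j. F w \<times> {w})"
    by (rule card_mono[rotated])
  also have "\<dots> \<le> (\<Sum>w\<in>X j. card (F w \<times> {w}))"
    by (rule card_UN_le) (use finite_X assms in simp)
  also have "\<dots> \<le> (\<Sum>w\<in>X j. b)"
    unfolding F_def
    by (intro sum_mono) (simp add: card_cartesian_product card_div_fibre_le[OF inj] b_def)
  finally have "card (bad i j) \<le> b * card (X j)" by (simp add: mult.commute)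
  then have "m * card (bad i j) \<le> m * b * card (X j)"
    by (simp add: mult.assoc)
  also have "\<dots> \<le> 2 * card (X i) * card (X j)"
    using mult_Suc_div_le[OF True] unfolding b_def by simp
  finally show ?thesis .
qed

lemma finite_bad_pairs: "finite bad_pairs"
proof -
  have "finite (bad i j)" if "i < k" "j < k" for i j
    by (rule finite_subset[of _ "X i \<times> X j"]) (auto simp: bad_def finite_X that)
  then show ?thesis
    unfolding bad_pairs_def by (intro finite_UN_I finite_Un finite_imageI) auto
qed

lemma non_homogeneous_bad_pairs:
  assumes "x \<in> V" "y \<in> V" "cell x \<noteq> cell y" "\<not> homogeneous E (cell x) (cell y)"
  shows "(x, y) \<in> bad_pairs"
proof -
  have sym: "\<not> homogeneous E (cell y) (cell x)"
    using assms(4) sym_E unfolding homogeneous_def by blast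
  have "block x \<noteq> block y" using homogeneous_same_block assms by blast
  then consider "block x < block y" | "block y < block x" by linarith
  then show ?thesis
  proof cases
    case 1
    then show ?thesis using non_homogeneous_bad[OF assms(1,2) 1 assms(4)] block_less[OF assms(2)]
      unfolding bad_pairs_def by blast
  next
    case 2
    have "(y, x) \<in> bad (block y) (block x)" using non_homogeneous_bad[OF assms(2,1) 2 sym] .
    then show ?thesis using 2 block_less[OF assms(1)] unfolding bad_pairs_def by force
  qed
qed

lemma card_V: "card V = (\<Sum>i<k. card (X i))"
  unfolding cover[symmetric] by (rule card_UN_disjoint) (use finite_X disjoint_X in auto)

lemma card_bad_pairs: "m * card bad_pairs \<le> 2 * (card V)\<^sup>2"
proof -
  have "card bad_pairs \<le> (\<Sum>j<k. card (\<Union>i<j. bad i j \<union> prod.swap ` bad i j))"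
    unfolding bad_pairs_def by (rule card_UN_le) simp
  also have "\<dots> \<le> (\<Sum>j<k. \<Sum>i<j. card (bad i j \<union> prod.swap ` bad i j))"
    by (rule sum_mono, rule card_UN_le) simp
  also have "\<dots> \<le> (\<Sum>j<k. \<Sum>i<j. 2 * card (bad i j))"
  proof (rule sum_mono, rule sum_mono)
    fix i j
    have "card (bad i j \<union> prod.swap ` bad i j) \<le> card (bad i j) + card (prod.swap ` bad i j)"
      by (rule card_Un_le)
    then show "card (bad i j \<union> prod.swap ` bad i j) \<le> 2 * card (bad i j)"
      by (simp add: card_image swap_inj_on)
  qed
  finally have "m * card bad_pairs \<le> m * (\<Sum>j<k. \<Sum>i<j. 2 * card (bad i j))"
    by (rule mult_le_mono2)
  also have "\<dots> = (\<Sum>j<k. \<Sum>i<j. 2 * (m * card (bad i j)))"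
    by (simp add: sum_distrib_left mult.left_commute)
  also have "\<dots> \<le> (\<Sum>j<k. \<Sum>i<j. 2 * (2 * card (X i) * card (X j)))"
    by (intro sum_mono mult_le_mono2 card_bad) auto
  also have "\<dots> = 2 * (2 * (\<Sum>j<k. card (X j) * (\<Sum>i<j. card (X i))))"
    by (simp add: sum_distrib_left mult_ac)
  also have "\<dots> \<le> 2 * (card V)\<^sup>2"
    unfolding card_V using sum_lower_pairs_le_square by simp
  finally show ?thesis .
qed

lemma delta_homogeneous_cells: "delta_homogeneous E V cells (1 / m)"
proof -
  let ?Q = "{(U, W). U \<in> cells \<and> W \<in> cells \<and> U \<noteq> W \<and> \<not> homogeneous E U W}"
  define S where "S = (\<Sum>(U, W)\<in>?Q. card U * card W)"
  have "S \<le> card bad_pairs"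
    unfolding S_def
  proof (rule sum_card_product_le_card[OF partition_on_cells finite_V _ finite_bad_pairs])
    fix U W x y assume UW: "(U, W) \<in> ?Q" and "x \<in> U" "y \<in> W"
    then have "U = cell x" "W = cell y" "x \<in> V" "y \<in> V"
      unfolding cells_def cell_def by auto
    with UW show "(x, y) \<in> bad_pairs"
      using non_homogeneous_bad_pairs by simp
  qed auto
  then have "m * S \<le> 2 * (card V)\<^sup>2"
    using order_trans[OF mult_le_mono2 card_bad_pairs] by blast
  then have "real m * real S \<le> 2 * (real (card V))\<^sup>2"
    using of_nat_mono by fastforce
  then have "real S / 2 \<le> 1 / real m * (real (card V))\<^sup>2"
    using m_pos by (simp add: field_simps)
  moreover have "real S = (\<Sum>(U, W)\<in>?Q. real (card U * card W))"
    unfolding S_def of_nat_sum by (simp add: case_prod_unfold)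
  ultimately show ?thesis
    unfolding delta_homogeneous_def by simp
qed

end

lemma ceiling_inverse_bounds:
  fixes \<delta> :: real
  assumes "0 < \<delta>" "\<delta> \<le> 1"
  shows "0 < nat \<lceil>1 / \<delta>\<rceil>" "1 / real (nat \<lceil>1 / \<delta>\<rceil>) \<le> \<delta>" "real (nat \<lceil>1 / \<delta>\<rceil>) \<le> 2 / \<delta>"
proof -
  define c where "c = real (nat \<lceil>1 / \<delta>\<rceil>)"
  have one: "1 \<le> 1 / \<delta>" using assms by simp
  then have c: "c = of_int \<lceil>1 / \<delta>\<rceil>" unfolding c_def by linarith
  have lower: "1 / \<delta> \<le> c" and upper: "c < 1 / \<delta> + 1"
    unfolding c by linarith+
  have "0 < c" using one lower by linarith
  then show "0 < nat \<lceil>1 / \<delta>\<rceil>" unfolding c_def by simp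
  have "1 \<le> c * \<delta>" using lower assms(1) by (simp add: pos_divide_le_eq)
  then show "1 / real (nat \<lceil>1 / \<delta>\<rceil>) \<le> \<delta>"
    using \<open>0 < c\<close> unfolding c_def[symmetric] by (simp add: divide_le_eq mult.commute)
  show "real (nat \<lceil>1 / \<delta>\<rceil>) \<le> 2 / \<delta>"
    using one upper unfolding c_def[symmetric] by simp
qed

theorem lemma2p3:
  fixes V :: "'a set" and E :: "'a \<Rightarrow> 'a \<Rightarrow> bool"
    and X :: "nat \<Rightarrow> 'a set" and k :: nat and \<delta> :: real
  assumes delta: "0 < \<delta>" "\<delta> \<le> 1"
    and finV: "finite V"
    and symE: "\<And>u v. E u v \<Longrightarrow> E v u"
    and irrE: "\<And>v. \<not> E v v"
    and nonempty: "\<And>i. i < k \<Longrightarrow> X i \<noteq> {}"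
    and disj: "\<And>i j. i < k \<Longrightarrow> j < k \<Longrightarrow> i \<noteq> j \<Longrightarrow> X i \<inter> X j = {}"
    and cover: "(\<Union>i<k. X i) = V"
    and cliques: "\<And>i. i < k \<Longrightarrow> clique E (X i)"
    and M2free: "\<And>i j. i < j \<Longrightarrow> j < k \<Longrightarrow> induced_M2_free E (X i) (X j)"
  shows "\<exists>P. partition_on V P \<and> delta_homogeneous E V P \<delta>
             \<and> refines P (X ` {..<k}) \<and> real (card P) \<le> real k * (2 / \<delta>) ^ k"
proof -
  have fin: "finite (X i)" if "i < k" for i
    by (rule finite_subset[OF _ finV]) (use that cover in blast)
  obtain \<rho> where \<rho>_bij: "\<And>i j. i < j \<Longrightarrow> j < k \<Longrightarrow> bij_betw (\<rho> i j) (X i) {..<card (X i)}"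
    and \<rho>_threshold: "\<And>i j u w. i < j \<Longrightarrow> j < k \<Longrightarrow> u \<in> X i \<Longrightarrow> w \<in> X j \<Longrightarrow>
           E u w \<longleftrightarrow> \<rho> i j u < card {x \<in> X i. E x w}"
    using induced_M2_free_threshold_family[where X = X and k = k, OF fin M2free] by blast
  define m where "m = nat \<lceil>1 / \<delta>\<rceil>"
  note m_bounds = ceiling_inverse_bounds[OF delta, folded m_def]
  interpret threshold_cliques V E X k \<rho> m
    by (rule threshold_cliques.intro) (fact finV symE disj cover cliques \<rho>_bij \<rho>_threshold m_bounds(1))+
  have "real (card cells) \<le> real k * real m ^ k"
    using of_nat_mono[OF card_cells] by simp
  also have "\<dots> \<le> real k * (2 / \<delta>) ^ k"
    by (intro mult_left_mono power_mono m_bounds(3)) auto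
  finally show ?thesis
    using partition_on_cells refines_cells
      delta_homogeneous_mono[OF delta_homogeneous_cells m_bounds(2)] by blast
qed

end
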